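(* Let $f=\sum_{J\in\mathbb{N}^n} a_J x^J$ be a nonzero real polynomial, let $\mathcal{M}$ be the set of $P\in\mathbb{N}^n$ with $a_P\neq 0$, and fix an integer $k\ge 0$. Let $M$ be the matrix whose rows are indexed by the vectors $I\in\{0,1\}^n$ with $|I|=k$, whose columns are indexed by the finitely many $J\in\mathbb{N}^n$ such that $I+J\in\mathcal{M}$ for some such $I$, and whose entries are $M_{I,J}=a_{I+J}$. Let $B=M^T M$. Then $$\mathrm{Tr}(B^2)\leq |\mathcal{M}|\,\mathrm{Tr}(B)\left(\sum_{R \in \mathcal{M}} a_R^2\right).$$
   Context: For $\alpha\in\mathbb{N}^n$, $x^\alpha = x_1^{\alpha_1}\cdots x_n^{\alpha_n}/(\alpha_1!\cdots\alpha_n!)$ (scaled monomial basis). For $I\in\{0,1\}^n$, $|I|=\sum_i I_i$. *)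

theory Defs
  imports Complex_Main
begin

text \<open>A real polynomial in the variables indexed by the finite type 'n is given by its
coefficient function a :: ('n \<Rightarrow> nat) \<Rightarrow> real (coefficients w.r.t. the scaled monomial
basis x^J), with finite support.\<close>

definition supp_coeffs :: "(('n \<Rightarrow> nat) \<Rightarrow> real) \<Rightarrow> ('n \<Rightarrow> nat) set" where
  "supp_coeffs a = {P. a P \<noteq> 0}"

definition rows01 :: "nat \<Rightarrow> ('n::finite \<Rightarrow> nat) set" where
  "rows01 k = {I. (\<forall>i. I i \<le> 1) \<and> (\<Sum>i\<in>UNIV. I i) = k}"

definition cols :: "(('n::finite \<Rightarrow> nat) \<Rightarrow> real) \<Rightarrow> nat \<Rightarrow> ('n \<Rightarrow> nat) set" where
  "cols a k = {J. \<exists>I\<in>rows01 k. (\<lambda>i. I i + J i) \<in> supp_coeffs a}"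

definition matM :: "(('n \<Rightarrow> nat) \<Rightarrow> real) \<Rightarrow> ('n \<Rightarrow> nat) \<Rightarrow> ('n \<Rightarrow> nat) \<Rightarrow> real" where
  "matM a I J = a (\<lambda>i. I i + J i)"

definition matB :: "(('n::finite \<Rightarrow> nat) \<Rightarrow> real) \<Rightarrow> nat \<Rightarrow> ('n \<Rightarrow> nat) \<Rightarrow> ('n \<Rightarrow> nat) \<Rightarrow> real" where
  "matB a k J J' = (\<Sum>I\<in>rows01 k. matM a I J * matM a I J')"

definition traceB :: "(('n::finite \<Rightarrow> nat) \<Rightarrow> real) \<Rightarrow> nat \<Rightarrow> real" where
  "traceB a k = (\<Sum>J\<in>cols a k. matB a k J J)"

definition traceB2 :: "(('n::finite \<Rightarrow> nat) \<Rightarrow> real) \<Rightarrow> nat \<Rightarrow> real" where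
  "traceB2 a k = (\<Sum>J\<in>cols a k. \<Sum>J'\<in>cols a k. matB a k J J' * matB a k J' J)"

end

theory Submission
  imports Defs "HOL-Analysis.Convex"
begin

text \<open>With \<open>B = M\<^sup>T M\<close>, \<open>Tr(B\<^sup>2) = Tr((M M\<^sup>T)\<^sup>2)\<close> is the sum over pairs of rows I, I' of the
  squared inner products \<open>(\<Sum>J. M I J * M I' J)\<^sup>2\<close>. Since \<open>J \<mapsto> I + J\<close> is injective, a row has
  at most \<open>|\<M>|\<close> nonzero entries, so Cauchy-Schwarz on the support bounds each square by
  \<open>|\<M>| * (\<Sum>J. (M I J)\<^sup>2 * (M I' J)\<^sup>2)\<close>. Summing over I, I' gives \<open>|\<M>| * (\<Sum>J. c J\<^sup>2)\<close>, where
  \<open>c J\<close> is the squared norm of column J; as \<open>I \<mapsto> I + J\<close> is injective too,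
  \<open>c J \<le> (\<Sum>R\<in>\<M>. a R\<^sup>2)\<close>, while \<open>\<Sum>J. c J = Tr B\<close>.\<close>

lemma square_sum_mult_le_card_nonzero:
  fixes f g :: "'a \<Rightarrow> real"
  assumes "finite C"
  shows "(\<Sum>J\<in>C. f J * g J)\<^sup>2 \<le> card {J\<in>C. f J \<noteq> 0} * (\<Sum>J\<in>C. (f J)\<^sup>2 * (g J)\<^sup>2)"
proof -
  let ?T = "{J\<in>C. f J \<noteq> 0}"
  have "(\<Sum>J\<in>C. f J * g J) = (\<Sum>J\<in>?T. f J * g J)"
    by (rule sum.mono_neutral_right) (use assms in auto)
  moreover have "(\<Sum>J\<in>C. (f J)\<^sup>2 * (g J)\<^sup>2) = (\<Sum>J\<in>?T. (f J)\<^sup>2 * (g J)\<^sup>2)"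
    by (rule sum.mono_neutral_right) (use assms in auto)
  ultimately show ?thesis
    using sum_squared_le_sum_of_squares[of "\<lambda>J. f J * g J" ?T]
    by (simp add: mult.commute power_mult_distrib)
qed

lemma trace_gram_square_eq:
  fixes x :: "'r \<Rightarrow> 'c \<Rightarrow> real"
  shows "(\<Sum>J\<in>C. \<Sum>J'\<in>C. (\<Sum>I\<in>R. x I J * x I J') * (\<Sum>I\<in>R. x I J' * x I J))
       = (\<Sum>I\<in>R. \<Sum>I'\<in>R. (\<Sum>J\<in>C. x I J * x I' J)\<^sup>2)"
proof -
  have "(\<Sum>J\<in>C. \<Sum>J'\<in>C. (\<Sum>I\<in>R. x I J * x I J') * (\<Sum>I\<in>R. x I J' * x I J))
      = (\<Sum>J\<in>C. \<Sum>J'\<in>C. \<Sum>I\<in>R. \<Sum>I'\<in>R. (x I J * x I' J) * (x I J' * x I' J'))"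
    by (simp add: sum_product mult_ac)
  also have "\<dots> = (\<Sum>I\<in>R. \<Sum>I'\<in>R. \<Sum>J\<in>C. \<Sum>J'\<in>C. (x I J * x I' J) * (x I J' * x I' J'))"
    by (subst (2) sum.swap, subst sum.swap, subst (3) sum.swap, subst (2) sum.swap) (rule refl)
  also have "\<dots> = (\<Sum>I\<in>R. \<Sum>I'\<in>R. (\<Sum>J\<in>C. x I J * x I' J)\<^sup>2)"
    by (simp add: power2_eq_square sum_product)
  finally show ?thesis .
qed

lemma trace_gram_square_le:
  fixes x :: "'r \<Rightarrow> 'c \<Rightarrow> real"
  assumes "finite C"
    and row_support: "\<And>I. I \<in> R \<Longrightarrow> card {J\<in>C. x I J \<noteq> 0} \<le> s"
    and column_norm: "\<And>J. J \<in> C \<Longrightarrow> (\<Sum>I\<in>R. (x I J)\<^sup>2) \<le> c"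
  shows "(\<Sum>J\<in>C. \<Sum>J'\<in>C. (\<Sum>I\<in>R. x I J * x I J') * (\<Sum>I\<in>R. x I J' * x I J))
       \<le> s * c * (\<Sum>J\<in>C. \<Sum>I\<in>R. (x I J)\<^sup>2)"
proof -
  have row_pair: "(\<Sum>J\<in>C. x I J * x I' J)\<^sup>2 \<le> s * (\<Sum>J\<in>C. (x I J)\<^sup>2 * (x I' J)\<^sup>2)"
    if "I \<in> R" for I I'
    using row_support[OF that]
    by (intro order_trans[OF square_sum_mult_le_card_nonzero[OF \<open>finite C\<close>]] mult_right_mono)
       (auto intro: sum_nonneg)
  have "(\<Sum>J\<in>C. \<Sum>J'\<in>C. (\<Sum>I\<in>R. x I J * x I J') * (\<Sum>I\<in>R. x I J' * x I J))
      \<le> (\<Sum>I\<in>R. \<Sum>I'\<in>R. s * (\<Sum>J\<in>C. (x I J)\<^sup>2 * (x I' J)\<^sup>2))"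
    unfolding trace_gram_square_eq by (intro sum_mono row_pair)
  also have "\<dots> = s * (\<Sum>J\<in>C. (\<Sum>I\<in>R. (x I J)\<^sup>2) * (\<Sum>I\<in>R. (x I J)\<^sup>2))"
    by (simp add: sum_distrib_left sum_distrib_right sum.swap[where A = R and B = C] mult_ac)
  also have "\<dots> \<le> s * (\<Sum>J\<in>C. c * (\<Sum>I\<in>R. (x I J)\<^sup>2))"
    by (intro mult_left_mono sum_mono mult_right_mono column_norm) (auto intro: sum_nonneg)
  also have "\<dots> = s * c * (\<Sum>J\<in>C. \<Sum>I\<in>R. (x I J)\<^sup>2)"
    by (simp add: sum_distrib_left mult.assoc)
  finally show ?thesis .
qed

lemma finite_pointwise_bounded_funs: "finite {f :: 'n::finite \<Rightarrow> nat. \<forall>i. f i \<le> m}"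
proof -
  have "{f :: 'n \<Rightarrow> nat. \<forall>i. f i \<le> m} = Pi\<^sub>E UNIV (\<lambda>_. {..m})"
    by (auto simp: PiE_UNIV_domain)
  then show ?thesis by (simp add: finite_PiE)
qed

lemma finite_rows01: "finite (rows01 k :: ('n::finite \<Rightarrow> nat) set)"
  by (rule finite_subset[OF _ finite_pointwise_bounded_funs[of 1]]) (auto simp: rows01_def)

lemma finite_cols:
  fixes a :: "('n::finite \<Rightarrow> nat) \<Rightarrow> real"
  assumes "finite (supp_coeffs a)"
  shows "finite (cols a k)"
proof -
  define m where "m = Max ((\<lambda>(R, i). R i) ` (supp_coeffs a \<times> UNIV))"
  have "R i \<le> m" if "R \<in> supp_coeffs a" for R i
    unfolding m_def using assms that by (intro Max_ge) force+
  then have "cols a k \<subseteq> {J. \<forall>i. J i \<le> m}"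
    unfolding cols_def by (auto intro: le_trans[OF le_add2])
  then show ?thesis
    by (rule finite_subset[OF _ finite_pointwise_bounded_funs])
qed

lemma card_nonzero_matM_row_le:
  fixes a :: "('n \<Rightarrow> nat) \<Rightarrow> real"
  assumes "finite (supp_coeffs a)"
  shows "card {J\<in>C. matM a I J \<noteq> 0} \<le> card (supp_coeffs a)"
  by (rule card_inj_on_le[of "\<lambda>J i. I i + J i"])
     (use assms in \<open>auto simp: inj_on_def fun_eq_iff matM_def supp_coeffs_def\<close>)

lemma sum_matM_column_squares_le:
  fixes a :: "('n \<Rightarrow> nat) \<Rightarrow> real"
  assumes "finite (supp_coeffs a)" and "finite A"
  shows "(\<Sum>I\<in>A. (matM a I J)\<^sup>2) \<le> (\<Sum>R\<in>supp_coeffs a. (a R)\<^sup>2)"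
proof -
  let ?shift = "\<lambda>I i. I i + J i"
  let ?A = "{I\<in>A. ?shift I \<in> supp_coeffs a}"
  have "(\<Sum>I\<in>A. (matM a I J)\<^sup>2) = (\<Sum>I\<in>?A. (a (?shift I))\<^sup>2)"
    unfolding matM_def
    by (rule sum.mono_neutral_right) (auto simp: assms(2) supp_coeffs_def)
  also have "\<dots> = (\<Sum>R\<in>?shift ` ?A. (a R)\<^sup>2)"
    by (subst sum.reindex) (auto simp: inj_on_def fun_eq_iff)
  also have "\<dots> \<le> (\<Sum>R\<in>supp_coeffs a. (a R)\<^sup>2)"
    by (rule sum_mono2[OF assms(1)]) auto
  finally show ?thesis .
qed

theorem lemma5:
  fixes a :: "('n::finite \<Rightarrow> nat) \<Rightarrow> real" and k :: nat
  assumes "finite (supp_coeffs a)"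
    and "supp_coeffs a \<noteq> {}"
  shows "traceB2 a k \<le> real (card (supp_coeffs a)) * traceB a k * (\<Sum>R\<in>supp_coeffs a. (a R)^2)"
proof -
  have "traceB2 a k \<le> real (card (supp_coeffs a)) * (\<Sum>R\<in>supp_coeffs a. (a R)\<^sup>2)
      * (\<Sum>J\<in>cols a k. \<Sum>I\<in>rows01 k. (matM a I J)\<^sup>2)"
    unfolding traceB2_def matB_def
    by (rule trace_gram_square_le[OF finite_cols[OF assms(1)] card_nonzero_matM_row_le[OF assms(1)]
        sum_matM_column_squares_le[OF assms(1) finite_rows01]])
  also have "\<dots> = real (card (supp_coeffs a)) * traceB a k * (\<Sum>R\<in>supp_coeffs a. (a R)\<^sup>2)"
    by (simp add: traceB_def matB_def power2_eq_square)
  finally show ?thesis .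
qed

end
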